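(* Let $\mathcal I$ be an ideal on $\mathbb N$ which is analytic or coanalytic. Then for any series $\sum_n x_n$ in a Banach space $X$, the set $$A(\mathcal I):=\left\{t \in \{0,1\}^{\mathbb N} \colon \sum_n t(n)x_n \text{ is } \mathcal I\text{-convergent}\right\}$$ is $\lambda$-measurable and $\lambda(A(\mathcal I))$ is either $0$ or $1$. Moreover, if $\sum_n x_n$ is $\mathcal I$-divergent, then $\lambda(A(\mathcal I))=0$.
   Context: $\mathbb N=\{1,2,\dots\}$. An ideal on $\mathbb N$ is a family $\mathcal I\subset\mathcal P(\mathbb N)$ closed under finite unions and subsets, with $\mathbb N\notin\mathcal I$ and containing all finite subsets of $\mathbb N$; via characteristic functions it is regarded as a subset of the Cantor space $\{0,1\}^{\mathbb N}$, and "analytic"/"coanalytic" refer to this subset. A sequence $(y_n)$ in a normed space is $\mathcal I$-convergent to $y$ if $\{n:\|y_n-y\|>\varepsilon\}\in\mathcal I$ for every $\varepsilon>0$; a series is $\mathcal I$-convergent if its sequence of partial sums is $\mathcal I$-convergent to some element, and $\mathcal I$-divergent otherwise. $\lambda$ is the product probability measure on $\{0,1\}^{\mathbb N}$ generated by the measure giving mass $1/2$ to each of $0$ and $1$ (the Haar measure on the Cantor group). Banach spaces are over $\mathbb R$. *)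

theory Defs
  imports "HOL-Probability.Probability"
begin

text \<open>Natural numbers N = {1,2,...} of the paper are represented by Isabelle's nat = {0,1,...}
  via the relabelling n \<mapsto> n - 1; all notions below are invariant under it.\<close>

definition ideal_on :: "nat set set \<Rightarrow> bool" where
  "ideal_on \<I> \<longleftrightarrow>
     (\<forall>A\<in>\<I>. \<forall>B\<in>\<I>. A \<union> B \<in> \<I>) \<and>
     (\<forall>A\<in>\<I>. \<forall>B. B \<subseteq> A \<longrightarrow> B \<in> \<I>) \<and>
     UNIV \<notin> \<I> \<and>
     (\<forall>F. finite F \<longrightarrow> F \<in> \<I>)"

definition cantor_space :: "(nat \<Rightarrow> bool) topology" where
  "cantor_space = product_topology (\<lambda>_. discrete_topology UNIV) UNIV"

definition baire_space :: "(nat \<Rightarrow> nat) topology" where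
  "baire_space = product_topology (\<lambda>_. discrete_topology UNIV) UNIV"

definition analytic_cantor :: "(nat \<Rightarrow> bool) set \<Rightarrow> bool" where
  "analytic_cantor A \<longleftrightarrow>
     A = {} \<or> (\<exists>f. continuous_map baire_space cantor_space f \<and> f ` UNIV = A)"

definition coanalytic_cantor :: "(nat \<Rightarrow> bool) set \<Rightarrow> bool" where
  "coanalytic_cantor A \<longleftrightarrow> analytic_cantor (UNIV - A)"

definition ideal_as_cantor :: "nat set set \<Rightarrow> (nat \<Rightarrow> bool) set" where
  "ideal_as_cantor \<I> = {t. {n. t n} \<in> \<I>}"

definition I_tendsto :: "nat set set \<Rightarrow> (nat \<Rightarrow> 'a::real_normed_vector) \<Rightarrow> 'a \<Rightarrow> bool" where
  "I_tendsto \<I> y L \<longleftrightarrow> (\<forall>\<epsilon>>0. {n. norm (y n - L) > \<epsilon>} \<in> \<I>)"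

definition I_convergent_series :: "nat set set \<Rightarrow> (nat \<Rightarrow> 'a::real_normed_vector) \<Rightarrow> bool" where
  "I_convergent_series \<I> x \<longleftrightarrow> (\<exists>L. I_tendsto \<I> (\<lambda>n. \<Sum>k\<le>n. x k) L)"

definition cantor_measure :: "(nat \<Rightarrow> bool) measure" where
  "cantor_measure = PiM UNIV (\<lambda>_. measure_pmf (bernoulli_pmf (1/2)))"

definition A_set :: "nat set set \<Rightarrow> (nat \<Rightarrow> 'a::real_normed_vector) \<Rightarrow> (nat \<Rightarrow> bool) set" where
  "A_set \<I> x = {t. I_convergent_series \<I> (\<lambda>n. (if t n then 1 else 0) *\<^sub>R x n)}"

end

theory Submission
  imports Defs
begin

text \<open>By the \<open>\<I>\<close>-Cauchy criterion, \<open>A(\<I>)\<close> is a countable intersection of countable unions of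
  sets \<open>{t. E t \<in> \<I>}\<close>, where \<open>E t\<close> is the set of indices at which the selected partial sums are
  far from a fixed one; every coordinate of \<open>E t\<close> depends on finitely many coordinates of \<open>t\<close>.
  For analytic \<open>\<I>\<close> such a preimage is the result of the Suslin operation applied to cylinder sets,
  and the completion of a finite measure is closed under the Suslin operation; the coanalytic case
  follows by complementation.

  Changing finitely many values \<open>t(n)\<close> eventually shifts the selected partial sums by a constant, so
  \<open>A(\<I>)\<close> is invariant under finite flips. Up to a null set it is then a tail event of the
  independent coordinates, and Kolmogorov's 0-1 law applies. Flipping all coordinates preserves
  \<open>\<lambda>\<close>, so if \<open>\<lambda>(A(\<I>)) = 1\<close> some \<open>t\<close> and its complement both lie in \<open>A(\<I>)\<close>; adding the two
  selected series shows that the whole series is \<open>\<I>\<close>-convergent.\<close>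

definition suslin :: "(nat list \<Rightarrow> 'a set) \<Rightarrow> 'a set" where
  "suslin F = {t. \<exists>\<sigma>::nat \<Rightarrow> nat. \<forall>n. t \<in> F (map \<sigma> [0..<n])}"

definition suslin_through :: "(nat list \<Rightarrow> 'a set) \<Rightarrow> nat list \<Rightarrow> 'a set" where
  "suslin_through F s =
     {t. \<exists>\<sigma>::nat \<Rightarrow> nat. map \<sigma> [0..<length s] = s \<and> (\<forall>n. t \<in> F (map \<sigma> [0..<n]))}"

lemma suslin_through_Nil: "suslin_through F [] = suslin F"
  by (simp add: suslin_through_def suslin_def)

lemma suslin_through_subset: "suslin_through F s \<subseteq> F s"
proof
  fix t assume "t \<in> suslin_through F s"
  then obtain \<sigma> where "map \<sigma> [0..<length s] = s" "\<forall>n. t \<in> F (map \<sigma> [0..<n])"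
    unfolding suslin_through_def by blast
  then show "t \<in> F s" by (metis (no_types))
qed

lemma suslin_through_subset_UN: "suslin_through F s \<subseteq> (\<Union>k. suslin_through F (s @ [k]))"
proof
  fix t assume "t \<in> suslin_through F s"
  then obtain \<sigma> where "map \<sigma> [0..<length s] = s" "\<forall>n. t \<in> F (map \<sigma> [0..<n])"
    unfolding suslin_through_def by blast
  then have "t \<in> suslin_through F (s @ [\<sigma> (length s)])"
    unfolding suslin_through_def by (intro CollectI exI[of _ \<sigma>]) simp
  then show "t \<in> (\<Union>k. suslin_through F (s @ [k]))" by blast
qed

lemma branch_exists:
  assumes "P []" and "\<And>s. P s \<Longrightarrow> \<exists>k. P (s @ [k])"
  shows "\<exists>\<sigma>::nat \<Rightarrow> nat. \<forall>n. P (map \<sigma> [0..<n])"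
proof -
  have "\<exists>f. \<forall>n. (P (f n) \<and> length (f n) = n) \<and> (\<exists>k. f (Suc n) = f n @ [k])"
  proof (rule dependent_nat_choice)
    show "\<exists>s. P s \<and> length s = 0" using assms(1) by auto
  next
    fix s n assume s: "P s \<and> length s = n"
    then obtain k where "P (s @ [k])" using assms(2) by blast
    then show "\<exists>s'. (P s' \<and> length s' = Suc n) \<and> (\<exists>k. s' = s @ [k])" using s by auto
  qed
  then obtain f where f: "\<And>n. P (f n)" "\<And>n. length (f n) = n" "\<And>n. \<exists>k. f (Suc n) = f n @ [k]"
    by blast
  define \<sigma> where "\<sigma> n = f (Suc n) ! n" for n
  have "map \<sigma> [0..<n] = f n" for n
  proof (induction n)
    case 0
    then show ?case using f(2)[of 0] by simp
  next
    case (Suc n)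
    obtain k where "f (Suc n) = f n @ [k]" using f(3) by blast
    then show ?case using Suc f(2)[of n] by (simp add: \<sigma>_def nth_append)
  qed
  then show ?thesis using f(1) by metis
qed

text \<open>The sets \<open>B s\<close> are measurable envelopes of \<open>suslin_through F s\<close> inside
  \<open>F s\<close>; a point of \<open>B []\<close> outside the null set where the envelopes fail to split lies on an
  infinite branch.\<close>
lemma (in finite_measure) suslin_in_completion:
  assumes F: "\<And>s. F s \<in> sets M"
  shows "suslin F \<in> sets (completion M)"
proof -
  have "\<exists>E. measurable_envelope M (suslin_through F s) E" for s
    using measurable_envelopeI_countable_cover[of "suslin_through F s" "\<lambda>_. space M" M]
      suslin_through_subset[of F s] sets.sets_into_space[OF F] by (auto simp: less_top[symmetric])
  then obtain E where E: "\<And>s. measurable_envelope M (suslin_through F s) (E s)" by metis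
  define B where "B s = E s \<inter> F s" for s
  define N where "N = (\<Union>s. B s - (\<Union>k. B (s @ [k])))"
  have B: "B s \<in> sets M" "suslin_through F s \<subseteq> B s" "B s \<subseteq> F s" for s
    using measurable_envelopeD(1,2)[OF E] suslin_through_subset[of F] F by (auto simp: B_def)
  have "B s - (\<Union>k. B (s @ [k])) \<in> null_sets M" for s
  proof -
    have "B s - (\<Union>k. B (s @ [k])) \<subseteq> E s - suslin_through F s"
      using suslin_through_subset_UN[of F s] B(2) by (fastforce simp: B_def)
    then show ?thesis using B(1) by (intro null_setsI measurable_envelopeD1[OF E]) auto
  qed
  then have N: "N \<in> null_sets M" unfolding N_def by blast
  have "B [] - N \<subseteq> suslin F"
  proof
    fix t assume t: "t \<in> B [] - N"
    have "\<exists>k. t \<in> B (s @ [k])" if "t \<in> B s" for s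
      using that t by (auto simp: N_def)
    then obtain \<sigma> where "\<forall>n. t \<in> B (map \<sigma> [0..<n])"
      using branch_exists[of "\<lambda>s. t \<in> B s"] t by blast
    then show "t \<in> suslin F" using B(3) by (auto simp: suslin_def)
  qed
  moreover have "suslin F \<subseteq> B []" using B(2)[of "[]"] by (simp add: suslin_through_Nil)
  ultimately have "suslin F = (B [] - N) \<union> (suslin F \<inter> N)" by blast
  then show ?thesis by (rule sets_completionI[OF _ _ N]) (use B(1) N in auto)
qed

lemma continuous_map_baire_cantor_finitely_determined:
  assumes "continuous_map baire_space cantor_space g"
  shows "\<exists>m. \<forall>\<tau>. (\<forall>j<m. \<tau> j = \<sigma> j) \<longrightarrow> g \<tau> i = g \<sigma> i"
proof -
  have "continuous_map baire_space (discrete_topology UNIV) (\<lambda>\<tau>. g \<tau> i)"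
    using assms unfolding cantor_space_def continuous_map_componentwise_UNIV by blast
  then have "openin baire_space {\<tau> \<in> topspace baire_space. g \<tau> i \<in> {g \<sigma> i}}"
    by (rule openin_continuous_map_preimage) simp
  then have "openin baire_space {\<tau>. g \<tau> i = g \<sigma> i}"
    by (simp add: baire_space_def)
  from bspec[OF this[unfolded baire_space_def openin_product_topology_alt],
      OF CollectI[of "\<lambda>\<tau>. g \<tau> i = g \<sigma> i", OF refl]]
  obtain U where U: "finite {j \<in> UNIV. U j \<noteq> topspace (discrete_topology (UNIV::nat set))}"
      "\<sigma> \<in> Pi\<^sub>E UNIV U" "Pi\<^sub>E UNIV U \<subseteq> {\<tau>. g \<tau> i = g \<sigma> i}"
    by (elim exE conjE) (rule that)
  have fin: "finite {j. U j \<noteq> UNIV}" using U(1) by simp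
  obtain m where "{j. U j \<noteq> UNIV} \<subseteq> {..<m}" using finite_nat_bounded[OF fin] by blast
  then have m: "\<And>j. U j \<noteq> UNIV \<Longrightarrow> j < m" by blast
  have "\<tau> \<in> Pi\<^sub>E UNIV U" if "\<forall>j<m. \<tau> j = \<sigma> j" for \<tau>
  proof (clarsimp simp: PiE_iff)
    fix j show "\<tau> j \<in> U j"
      using U(2) that m[of j] by (cases "U j = UNIV") auto
  qed
  then show ?thesis using U(3) by (intro exI[of _ m]) blast
qed

lemma space_cantor_measure [simp]: "space cantor_measure = UNIV"
  by (simp add: cantor_measure_def space_PiM)

lemma prob_space_cantor_measure: "prob_space cantor_measure"
  unfolding cantor_measure_def by (intro prob_space_PiM prob_space_measure_pmf)

lemma sets_cantor_measure_UNIV [simp]: "UNIV \<in> sets cantor_measure"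
  by (metis sets.top space_cantor_measure)

lemma sets_cantor_measure_coordinate: "{t. t k = b} \<in> sets cantor_measure"
proof -
  have "{t \<in> space cantor_measure. t k \<in> {b}} \<in> sets cantor_measure"
    unfolding cantor_measure_def by (rule sets_Collect_single') auto
  then show ?thesis by simp
qed

lemma sets_cantor_measure_finitely_determined:
  assumes "\<And>t t'. (\<forall>k<K. t k = t' k) \<Longrightarrow> P t = P t'"
  shows "{t. P t} \<in> sets cantor_measure"
  using assms
proof (induction K arbitrary: P)
  case 0
  then have "P t = P (\<lambda>_. False)" for t by blast
  then have "{t. P t} = (if P (\<lambda>_. False) then UNIV else {})" by auto
  then show ?case by simp
next
  case (Suc K)
  have IH: "{t. P (t(K := b))} \<in> sets cantor_measure" for b
  proof (rule Suc.IH)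
    fix t t' :: "nat \<Rightarrow> bool" assume "\<forall>k<K. t k = t' k"
    then have "\<forall>k<Suc K. (t(K := b)) k = (t'(K := b)) k" by auto
    then show "P (t(K := b)) = P (t'(K := b))" by (rule Suc.prems)
  qed
  have "{t. P t} = (\<Union>b. {t. t K = b} \<inter> {t. P (t(K := b))})"
  proof (intro set_eqI iffI)
    fix t assume "t \<in> {t. P t}"
    then have "t \<in> {t'. t' K = t K} \<inter> {t'. P (t'(K := t K))}" by simp
    then show "t \<in> (\<Union>b. {t. t K = b} \<inter> {t. P (t(K := b))})" by blast
  next
    fix t assume "t \<in> (\<Union>b. {t. t K = b} \<inter> {t. P (t(K := b))})"
    then obtain b where "t K = b" "P (t(K := b))" by blast
    then show "t \<in> {t. P t}" by (simp add: fun_upd_idem)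
  qed
  then show ?case
    using IH sets_cantor_measure_coordinate by (simp add: sets.countable_UN)
qed

definition zero_extend :: "nat list \<Rightarrow> nat \<Rightarrow> nat" where
  "zero_extend s j = (if j < length s then s ! j else 0)"

text \<open>The set indexed by the prefix \<open>s\<close> says that \<open>E t\<close> agrees with \<open>g\<close> on every coordinate that
  \<open>s\<close> already decides; \<open>zero_extend s\<close> is merely some point of the cylinder of \<open>s\<close>.\<close>
lemma range_membership_eq_suslin:
  fixes g :: "(nat \<Rightarrow> nat) \<Rightarrow> nat \<Rightarrow> 'b" and E :: "'a \<Rightarrow> nat \<Rightarrow> 'b"
  assumes g: "\<And>\<sigma> i. \<exists>m. \<forall>\<tau>. (\<forall>j<m. \<tau> j = \<sigma> j) \<longrightarrow> g \<tau> i = g \<sigma> i"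
  shows "{t. E t \<in> range g} = suslin (\<lambda>s. {t. \<forall>i.
      (\<forall>\<tau>. map \<tau> [0..<length s] = s \<longrightarrow> g \<tau> i = g (zero_extend s) i) \<longrightarrow> E t i = g (zero_extend s) i})"
    (is "_ = suslin ?F")
proof (intro set_eqI iffI)
  fix t assume "t \<in> {t. E t \<in> range g}"
  then obtain \<sigma> where "E t = g \<sigma>" by auto
  then have "t \<in> ?F (map \<sigma> [0..<n])" for n by auto
  then show "t \<in> suslin ?F" unfolding suslin_def by blast
next
  fix t assume "t \<in> suslin ?F"
  then obtain \<sigma> where \<sigma>: "\<And>n. t \<in> ?F (map \<sigma> [0..<n])" unfolding suslin_def by blast
  have "g \<sigma> i = E t i" for i
  proof -
    obtain m where m: "\<And>\<tau>. \<forall>j<m. \<tau> j = \<sigma> j \<Longrightarrow> g \<tau> i = g \<sigma> i" using g by blast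
    define s where "s = map \<sigma> [0..<m]"
    have zs: "\<forall>j<m. zero_extend s j = \<sigma> j" by (simp add: zero_extend_def s_def)
    have "\<forall>\<tau>. map \<tau> [0..<length s] = s \<longrightarrow> g \<tau> i = g (zero_extend s) i"
    proof (intro allI impI)
      fix \<tau> :: "nat \<Rightarrow> nat" assume "map \<tau> [0..<length s] = s"
      then have "\<forall>j<m. \<tau> j = \<sigma> j" by (simp add: s_def map_eq_conv)
      then show "g \<tau> i = g (zero_extend s) i" using m zs by metis
    qed
    then have "E t i = g (zero_extend s) i" using \<sigma>[of m] by (simp add: s_def)
    then show ?thesis using m zs by metis
  qed
  then have "E t = g \<sigma>" by (simp add: fun_eq_iff)
  then show "t \<in> {t. E t \<in> range g}" by simp
qed

lemma analytic_preimage_in_completion: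
  fixes E :: "(nat \<Rightarrow> bool) \<Rightarrow> nat \<Rightarrow> bool"
  assumes g: "continuous_map baire_space cantor_space g"
    and E: "\<And>i b. {t. E t i = b} \<in> sets cantor_measure"
  shows "{t. E t \<in> range g} \<in> sets (completion cantor_measure)"
proof -
  interpret prob_space cantor_measure by (rule prob_space_cantor_measure)
  have "{t. \<forall>i. P i \<longrightarrow> E t i = c i} \<in> sets cantor_measure" for P c
  proof -
    have "{t. \<forall>i. P i \<longrightarrow> E t i = c i} = (\<Inter>i\<in>{i. P i}. {t. E t i = c i})" by auto
    also have "\<dots> \<in> sets cantor_measure" by (intro sets.countable_INT'') (simp_all add: E)
    finally show ?thesis .
  qed
  then show ?thesis
    unfolding range_membership_eq_suslin[OF continuous_map_baire_cantor_finitely_determined[OF g]]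
    by (intro suslin_in_completion)
qed

lemma analytic_or_coanalytic_preimage_in_completion:
  fixes E :: "(nat \<Rightarrow> bool) \<Rightarrow> nat \<Rightarrow> bool"
  assumes S: "analytic_cantor S \<or> coanalytic_cantor S"
    and E: "\<And>i b. {t. E t i = b} \<in> sets cantor_measure"
  shows "{t. E t \<in> S} \<in> sets (completion cantor_measure)"
proof -
  have analytic: "{t. E t \<in> A} \<in> sets (completion cantor_measure)" if "analytic_cantor A" for A
    using that analytic_preimage_in_completion[OF _ E] unfolding analytic_cantor_def by auto
  from S show ?thesis
  proof
    assume "coanalytic_cantor S"
    then have "{t. E t \<in> UNIV - S} \<in> sets (completion cantor_measure)"
      unfolding coanalytic_cantor_def by (rule analytic)
    then have "UNIV - {t. E t \<in> UNIV - S} \<in> sets (completion cantor_measure)"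
      by (metis sets.compl_sets space_completion space_cantor_measure)
    then show ?thesis by (simp add: set_diff_eq)
  qed (rule analytic)
qed

lemma ideal_on_subset: "ideal_on I \<Longrightarrow> A \<in> I \<Longrightarrow> B \<subseteq> A \<Longrightarrow> B \<in> I"
  unfolding ideal_on_def by blast

lemma ideal_on_Un: "ideal_on I \<Longrightarrow> A \<in> I \<Longrightarrow> B \<in> I \<Longrightarrow> A \<union> B \<in> I"
  unfolding ideal_on_def by blast

lemma ideal_on_finite: "ideal_on I \<Longrightarrow> finite A \<Longrightarrow> A \<in> I"
  unfolding ideal_on_def by blast

lemma ideal_on_proper: "ideal_on I \<Longrightarrow> A \<in> I \<Longrightarrow> \<exists>n. n \<notin> A"
  unfolding ideal_on_def by blast

lemma I_tendsto_eventually_translate: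
  fixes y z :: "nat \<Rightarrow> 'a::real_normed_vector"
  assumes I: "ideal_on I" and y: "I_tendsto I y L" and z: "\<And>n. n \<ge> N \<Longrightarrow> z n = y n + c"
  shows "I_tendsto I z (L + c)"
  unfolding I_tendsto_def
proof (intro allI impI)
  fix \<epsilon> :: real assume "\<epsilon> > 0"
  have "{n. \<epsilon> < norm (z n - (L + c))} \<subseteq> {n. \<epsilon> < norm (y n - L)} \<union> {..<N}"
  proof
    fix n assume n: "n \<in> {n. \<epsilon> < norm (z n - (L + c))}"
    show "n \<in> {n. \<epsilon> < norm (y n - L)} \<union> {..<N}"
    proof (cases "N \<le> n")
      case True
      then have "z n - (L + c) = y n - L" unfolding z[OF True] by simp
      then show ?thesis using n by (metis (mono_tags, lifting) UnI1 mem_Collect_eq)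
    qed simp
  qed
  moreover have "{n. \<epsilon> < norm (y n - L)} \<union> {..<N} \<in> I"
    using y \<open>\<epsilon> > 0\<close> ideal_on_Un[OF I _ ideal_on_finite[OF I finite_lessThan]]
    unfolding I_tendsto_def by blast
  ultimately show "{n. \<epsilon> < norm (z n - (L + c))} \<in> I" using I ideal_on_subset by blast
qed

lemma I_tendsto_add:
  fixes a b :: "nat \<Rightarrow> 'a::real_normed_vector"
  assumes I: "ideal_on I" and a: "I_tendsto I a L" and b: "I_tendsto I b M"
  shows "I_tendsto I (\<lambda>n. a n + b n) (L + M)"
  unfolding I_tendsto_def
proof (intro allI impI)
  fix \<epsilon> :: real assume "\<epsilon> > 0"
  have "{n. \<epsilon> < norm (a n + b n - (L + M))}
      \<subseteq> {n. \<epsilon>/2 < norm (a n - L)} \<union> {n. \<epsilon>/2 < norm (b n - M)}"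
  proof
    fix n assume "n \<in> {n. \<epsilon> < norm (a n + b n - (L + M))}"
    moreover have "norm (a n + b n - (L + M)) \<le> norm (a n - L) + norm (b n - M)"
      using norm_triangle_ineq[of "a n - L" "b n - M"] by (simp add: algebra_simps)
    ultimately show "n \<in> {n. \<epsilon>/2 < norm (a n - L)} \<union> {n. \<epsilon>/2 < norm (b n - M)}"
      by (simp; linarith)
  qed
  moreover have "\<epsilon>/2 > 0" using \<open>\<epsilon> > 0\<close> by simp
  then have "{n. \<epsilon>/2 < norm (a n - L)} \<union> {n. \<epsilon>/2 < norm (b n - M)} \<in> I"
    using a b I ideal_on_Un unfolding I_tendsto_def by blast
  ultimately show "{n. \<epsilon> < norm (a n + b n - (L + M))} \<in> I" using I ideal_on_subset by blast
qed

definition I_Cauchy :: "nat set set \<Rightarrow> (nat \<Rightarrow> 'a::real_normed_vector) \<Rightarrow> bool" where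
  "I_Cauchy I y \<longleftrightarrow> (\<forall>\<epsilon>>0. \<exists>N. {n. \<epsilon> < norm (y n - y N)} \<in> I)"

lemma I_Cauchy_iff_inverse_Suc:
  assumes I: "ideal_on I"
  shows "I_Cauchy I y \<longleftrightarrow> (\<forall>m. \<exists>N. {n. inverse (real (Suc m)) < norm (y n - y N)} \<in> I)"
proof
  assume "I_Cauchy I y"
  then show "\<forall>m. \<exists>N. {n. inverse (real (Suc m)) < norm (y n - y N)} \<in> I"
    by (simp add: I_Cauchy_def)
next
  assume small: "\<forall>m. \<exists>N. {n. inverse (real (Suc m)) < norm (y n - y N)} \<in> I"
  show "I_Cauchy I y"
    unfolding I_Cauchy_def
  proof (intro allI impI)
    fix \<epsilon> :: real assume "\<epsilon> > 0"
    then obtain m where m: "inverse (real (Suc m)) < \<epsilon>" using reals_Archimedean by blast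
    obtain N where "{n. inverse (real (Suc m)) < norm (y n - y N)} \<in> I" using small by blast
    moreover have "{n. \<epsilon> < norm (y n - y N)} \<subseteq> {n. inverse (real (Suc m)) < norm (y n - y N)}"
      using m by auto
    ultimately show "\<exists>N. {n. \<epsilon> < norm (y n - y N)} \<in> I" using I ideal_on_subset by blast
  qed
qed

lemma I_Cauchy_if_I_tendsto:
  assumes I: "ideal_on I" and y: "I_tendsto I y L"
  shows "I_Cauchy I y"
  unfolding I_Cauchy_def
proof (intro allI impI)
  fix \<epsilon> :: real assume "\<epsilon> > 0"
  then have "\<epsilon>/2 > 0" by simp
  then have far: "{n. \<epsilon>/2 < norm (y n - L)} \<in> I" using y unfolding I_tendsto_def by blast
  then obtain N where N: "norm (y N - L) \<le> \<epsilon>/2" using ideal_on_proper[OF I far] by (auto simp: not_less)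
  have "{n. \<epsilon> < norm (y n - y N)} \<subseteq> {n. \<epsilon>/2 < norm (y n - L)}"
  proof
    fix n assume "n \<in> {n. \<epsilon> < norm (y n - y N)}"
    moreover have "norm (y n - y N) \<le> norm (y n - L) + norm (y N - L)"
      using norm_triangle_ineq4[of "y n - L" "y N - L"] by simp
    ultimately show "n \<in> {n. \<epsilon>/2 < norm (y n - L)}" using N by (simp; linarith)
  qed
  then show "\<exists>N. {n. \<epsilon> < norm (y n - y N)} \<in> I" using far I ideal_on_subset by blast
qed

text \<open>The ideal is proper, so the two exceptional sets leave some index \<open>n\<close>.\<close>
lemma ideal_on_centres_close:
  assumes I: "ideal_on I"
    and a: "{n. d < norm (y n - a)} \<in> I" and b: "{n. e < norm (y n - b)} \<in> I"
  shows "norm (a - b) \<le> d + e"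
proof -
  obtain n where n: "norm (y n - a) \<le> d" "norm (y n - b) \<le> e"
    using ideal_on_proper[OF I ideal_on_Un[OF I a b]] by (auto simp: not_less)
  have "norm (a - b) \<le> norm (y n - a) + norm (y n - b)"
    using norm_triangle_ineq4[of "y n - b" "y n - a"] by (simp add: norm_minus_commute add.commute)
  then show ?thesis using n by simp
qed

lemma exists_limit_if_norm_diff_le:
  fixes a :: "nat \<Rightarrow> 'a::banach"
  assumes close: "\<And>j k. norm (a j - a k) \<le> r j + r k" and r: "r \<longlonglongrightarrow> 0"
  obtains L where "\<And>j. norm (a j - L) \<le> r j"
proof -
  have "Cauchy a"
  proof (rule metric_CauchyI)
    fix \<epsilon> :: real assume "\<epsilon> > 0"
    then obtain M where M: "\<forall>m\<ge>M. norm (r m - 0) < \<epsilon>/2" using LIMSEQ_D[OF r, of "\<epsilon>/2"] by auto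
    show "\<exists>M. \<forall>m\<ge>M. \<forall>n\<ge>M. dist (a m) (a n) < \<epsilon>"
    proof (intro exI allI impI)
      fix m n assume "M \<le> m" "M \<le> n"
      then have "r m < \<epsilon>/2" "r n < \<epsilon>/2" using M by auto
      then show "dist (a m) (a n) < \<epsilon>" using close[of m n] by (simp add: dist_norm)
    qed
  qed
  then obtain L where L: "a \<longlonglongrightarrow> L" using Cauchy_convergent_iff convergent_def by blast
  have "norm (a j - L) \<le> r j" for j
  proof (rule tendsto_le[OF trivial_limit_sequentially])
    show "(\<lambda>k. r j + r k) \<longlonglongrightarrow> r j" using tendsto_add[OF tendsto_const r] by simp
    show "(\<lambda>k. norm (a j - a k)) \<longlonglongrightarrow> norm (a j - L)" by (intro tendsto_intros L)
  qed (use close in simp)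
  then show ?thesis by (rule that)
qed

lemma I_tendsto_if_I_Cauchy:
  fixes y :: "nat \<Rightarrow> 'a::banach"
  assumes I: "ideal_on I" and y: "I_Cauchy I y"
  shows "\<exists>L. I_tendsto I y L"
proof -
  define r where "r m = inverse (real (Suc m))" for m
  have r_pos: "r m > 0" for m by (simp add: r_def)
  have "\<forall>m. \<exists>N. {n. r m < norm (y n - y N)} \<in> I"
    using y r_pos by (simp add: I_Cauchy_def)
  then obtain N where N: "\<And>m. {n. r m < norm (y n - y (N m))} \<in> I" by metis
  have close: "norm (y (N j) - y (N k)) \<le> r j + r k" for j k
    using ideal_on_centres_close[OF I N N] .
  have r_to_0: "r \<longlonglongrightarrow> 0" unfolding r_def by (rule LIMSEQ_inverse_real_of_nat)
  obtain L where near: "\<And>j. norm (y (N j) - L) \<le> r j"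
    using exists_limit_if_norm_diff_le[of "\<lambda>m. y (N m)" r, OF close r_to_0] by blast
  have "I_tendsto I y L"
    unfolding I_tendsto_def
  proof (intro allI impI)
    fix \<epsilon> :: real assume "\<epsilon> > 0"
    then obtain j where j: "r j < \<epsilon>/2" using reals_Archimedean[of "\<epsilon>/2"] by (auto simp: r_def)
    have "{n. \<epsilon> < norm (y n - L)} \<subseteq> {n. r j < norm (y n - y (N j))}"
    proof
      fix n assume "n \<in> {n. \<epsilon> < norm (y n - L)}"
      moreover have "norm (y n - L) \<le> norm (y n - y (N j)) + norm (y (N j) - L)"
        using norm_triangle_ineq[of "y n - y (N j)" "y (N j) - L"] by simp
      ultimately show "n \<in> {n. r j < norm (y n - y (N j))}"
        using near[of j] j r_pos[of j] by (simp; linarith)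
    qed
    then show "{n. \<epsilon> < norm (y n - L)} \<in> I" using N I ideal_on_subset by blast
  qed
  then show ?thesis by blast
qed

lemma I_convergent_iff_I_Cauchy:
  fixes y :: "nat \<Rightarrow> 'a::banach"
  assumes "ideal_on I"
  shows "(\<exists>L. I_tendsto I y L) \<longleftrightarrow> I_Cauchy I y"
  using I_Cauchy_if_I_tendsto I_tendsto_if_I_Cauchy assms by blast

definition flip :: "nat set \<Rightarrow> (nat \<Rightarrow> bool) \<Rightarrow> nat \<Rightarrow> bool" where
  "flip G t = (\<lambda>i. if i \<in> G then \<not> t i else t i)"

lemma flip_empty [simp]: "flip {} t = t"
  by (simp add: flip_def)

lemma flip_flip: "flip G (flip H t) = flip ((G - H) \<union> (H - G)) t"
  by (auto simp: flip_def fun_eq_iff)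

lemma flip_flip_same [simp]: "flip G (flip G t) = t"
  by (simp add: flip_flip)

definition flip_invariant :: "(nat \<Rightarrow> bool) set \<Rightarrow> bool" where
  "flip_invariant A \<longleftrightarrow> (\<forall>G t. finite G \<longrightarrow> (flip G t \<in> A \<longleftrightarrow> t \<in> A))"

definition selected_sum :: "(nat \<Rightarrow> 'a::real_normed_vector) \<Rightarrow> (nat \<Rightarrow> bool) \<Rightarrow> nat \<Rightarrow> 'a" where
  "selected_sum x t n = (\<Sum>k\<le>n. (if t k then 1 else 0) *\<^sub>R x k)"

lemma mem_A_set_iff: "t \<in> A_set I x \<longleftrightarrow> (\<exists>L. I_tendsto I (selected_sum x t) L)"
  by (simp add: A_set_def I_convergent_series_def selected_sum_def[abs_def])

lemma selected_sum_flip: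
  assumes "finite G" and "\<forall>k\<in>G. k \<le> n"
  shows "selected_sum x (flip G t) n = selected_sum x t n + (\<Sum>k\<in>G. if t k then - x k else x k)"
proof -
  have "selected_sum x (flip G t) n - selected_sum x t n
      = (\<Sum>k\<le>n. if k \<in> G then (if t k then - x k else x k) else 0)"
    unfolding selected_sum_def sum_subtractf[symmetric] by (intro sum.cong) (auto simp: flip_def)
  also have "\<dots> = (\<Sum>k\<in>{..n} \<inter> G. if t k then - x k else x k)"
    by (simp add: sum.inter_restrict)
  also have "{..n} \<inter> G = G" using assms(2) by auto
  finally show ?thesis by (simp add: algebra_simps)
qed

lemma flip_in_A_set:
  assumes I: "ideal_on I" and G: "finite G" and t: "t \<in> A_set I x"
  shows "flip G t \<in> A_set I x"
proof -
  obtain N where N: "\<forall>k\<in>G. k \<le> N" using G finite_nat_set_iff_bounded_le by blast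
  from t obtain L where "I_tendsto I (selected_sum x t) L" by (auto simp: mem_A_set_iff)
  then have "I_tendsto I (selected_sum x (flip G t)) (L + (\<Sum>k\<in>G. if t k then - x k else x k))"
  proof (rule I_tendsto_eventually_translate[OF I])
    fix n assume "N \<le> n"
    then show "selected_sum x (flip G t) n = selected_sum x t n + (\<Sum>k\<in>G. if t k then - x k else x k)"
      using N by (intro selected_sum_flip G) auto
  qed
  then show ?thesis by (auto simp: mem_A_set_iff)
qed

lemma flip_invariant_A_set: "ideal_on I \<Longrightarrow> flip_invariant (A_set I x)"
  unfolding flip_invariant_def using flip_in_A_set flip_flip_same by metis

lemma I_convergent_series_if_flip_UNIV:
  assumes I: "ideal_on I" and "t \<in> A_set I x" and "flip UNIV t \<in> A_set I x"
  shows "I_convergent_series I x"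
proof -
  obtain L M where "I_tendsto I (selected_sum x t) L" "I_tendsto I (selected_sum x (flip UNIV t)) M"
    using assms by (auto simp: mem_A_set_iff)
  from I_tendsto_add[OF I this]
  have "I_tendsto I (\<lambda>n. selected_sum x t n + selected_sum x (flip UNIV t) n) (L + M)" .
  moreover have "selected_sum x t n + selected_sum x (flip UNIV t) n = (\<Sum>k\<le>n. x k)" for n
    unfolding selected_sum_def sum.distrib[symmetric] by (intro sum.cong) (auto simp: flip_def)
  ultimately show ?thesis unfolding I_convergent_series_def by auto
qed

lemma emeasure_bernoulli_half_vimage_Not:
  "emeasure (measure_pmf (bernoulli_pmf (1/2))) (Not -` S) = emeasure (measure_pmf (bernoulli_pmf (1/2))) S"
proof -
  have "card (Not -` S) = card S"
    by (rule card_vimage_inj) (auto simp: inj_def image_def intro: exI[of _ "\<not> x" for x])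
  then show ?thesis
    unfolding measure_pmf_bernoulli_half by (simp add: emeasure_uniform_count_measure)
qed

lemma measurable_flip: "flip G \<in> cantor_measure \<rightarrow>\<^sub>M cantor_measure"
  unfolding cantor_measure_def
proof (rule measurable_PiM_single)
  fix A i
  show "{t \<in> space (Pi\<^sub>M UNIV (\<lambda>_. measure_pmf (bernoulli_pmf (1/2)))). flip G t i \<in> A}
      \<in> sets (Pi\<^sub>M UNIV (\<lambda>_. measure_pmf (bernoulli_pmf (1/2))))"
    unfolding flip_def by (rule sets_Collect_single') auto
qed (simp add: space_PiM)

lemma distr_flip_cantor_measure: "distr cantor_measure cantor_measure (flip G) = cantor_measure"
proof -
  define B where "B = measure_pmf (bernoulli_pmf (1/2))"
  have C: "cantor_measure = PiM UNIV (\<lambda>_. B)" by (simp add: cantor_measure_def B_def)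
  have "PiM UNIV (\<lambda>_::nat. B) = distr (PiM UNIV (\<lambda>_. B)) (PiM UNIV (\<lambda>_. B)) (flip G)"
  proof (rule measure_eqI_PiM_infinite[OF refl])
    have "prob_space (PiM UNIV (\<lambda>_::nat. B))"
      unfolding B_def by (intro prob_space_PiM prob_space_measure_pmf)
    then show "finite_measure (PiM UNIV (\<lambda>_::nat. B))" by (simp add: prob_space_def)
    fix A :: "nat \<Rightarrow> bool set" and J :: "nat set" assume J: "finite J"
    define A' where "A' j = (if j \<in> G then Not -` A j else A j)" for j
    have "flip G -` prod_emb UNIV (\<lambda>_. B) J (Pi\<^sub>E J A) \<inter> space (PiM UNIV (\<lambda>_. B))
        = prod_emb UNIV (\<lambda>_. B) J (Pi\<^sub>E J A')"
      by (auto simp: prod_emb_def flip_def PiE_iff space_PiM A'_def B_def) (drule (1) bspec, simp)+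
    then have "emeasure (distr (PiM UNIV (\<lambda>_. B)) (PiM UNIV (\<lambda>_. B)) (flip G)) (prod_emb UNIV (\<lambda>_. B) J (Pi\<^sub>E J A))
        = emeasure (PiM UNIV (\<lambda>_. B)) (prod_emb UNIV (\<lambda>_. B) J (Pi\<^sub>E J A'))"
      using J measurable_flip[of G] unfolding C by (subst emeasure_distr) (auto intro!: sets_PiM_I simp: B_def)
    also have "\<dots> = (\<Prod>j\<in>J. emeasure B (A' j))"
      using J unfolding B_def by (intro emeasure_PiM_emb prob_space_measure_pmf) auto
    also have "\<dots> = (\<Prod>j\<in>J. emeasure B (A j))"
      by (intro prod.cong refl) (simp add: A'_def B_def emeasure_bernoulli_half_vimage_Not)
    also have "\<dots> = emeasure (PiM UNIV (\<lambda>_. B)) (prod_emb UNIV (\<lambda>_. B) J (Pi\<^sub>E J A))"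
      using J unfolding B_def by (intro emeasure_PiM_emb[symmetric] prob_space_measure_pmf) auto
    finally show "emeasure (PiM UNIV (\<lambda>_. B)) (prod_emb UNIV (\<lambda>_. B) J (Pi\<^sub>E J A)) =
        emeasure (distr (PiM UNIV (\<lambda>_. B)) (PiM UNIV (\<lambda>_. B)) (flip G)) (prod_emb UNIV (\<lambda>_. B) J (Pi\<^sub>E J A))"
      by simp
  qed simp
  then show ?thesis unfolding C by simp
qed

lemma sets_vimage_flip: "S \<in> sets cantor_measure \<Longrightarrow> flip G -` S \<in> sets cantor_measure"
  using measurable_sets[OF measurable_flip, of S G] by simp

lemma emeasure_vimage_flip:
  assumes "S \<in> sets cantor_measure"
  shows "emeasure cantor_measure (flip G -` S) = emeasure cantor_measure S"
  using emeasure_distr[OF measurable_flip assms, of G] by (simp add: distr_flip_cantor_measure)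

lemma null_sets_vimage_flip: "N \<in> null_sets cantor_measure \<Longrightarrow> flip G -` N \<in> null_sets cantor_measure"
  using emeasure_vimage_flip[of N G] sets_vimage_flip[of N G] by (auto simp: null_sets_def)

lemma measure_completion_Un_null:
  assumes "N \<subseteq> N'" "N' \<in> null_sets M" "S \<in> sets M"
  shows "measure (completion M) (S \<union> N) = measure M S"
proof -
  have "N \<in> null_sets (completion M)"
    using null_sets_completionI[OF assms(2)] null_sets_completion[OF assms(2,1)] assms(1)
    by (blast intro: null_sets_subset)
  then show ?thesis using assms(3) by (simp add: measure_Un_null_set)
qed

lemma measure_completion_vimage_flip:
  assumes "A \<in> sets (completion cantor_measure)"
  shows "measure (completion cantor_measure) (flip G -` A) = measure (completion cantor_measure) A"
proof -
  obtain S N N' where A: "A = S \<union> N" "N \<subseteq> N'" "N' \<in> null_sets cantor_measure" "S \<in> sets cantor_measure"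
    using sets_completionE[OF assms] by metis
  then have "flip G -` A = flip G -` S \<union> flip G -` N" and "flip G -` N \<subseteq> flip G -` N'"
    by auto
  then have "measure (completion cantor_measure) (flip G -` A) = measure cantor_measure (flip G -` S)"
    using null_sets_vimage_flip[OF A(3)] sets_vimage_flip[OF A(4)]
    by (simp add: measure_completion_Un_null)
  also have "\<dots> = measure cantor_measure S"
    using emeasure_vimage_flip[OF A(4)] by (simp add: measure_def)
  also have "\<dots> = measure (completion cantor_measure) A"
    unfolding A(1) using A by (intro measure_completion_Un_null[symmetric])
  finally show ?thesis .
qed

definition coordinate_events :: "nat \<Rightarrow> (nat \<Rightarrow> bool) set set" where
  "coordinate_events i = sigma_sets UNIV
     {(\<lambda>t. t i) -` X \<inter> UNIV | X. X \<in> sets (measure_pmf (bernoulli_pmf (1/2)))}"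

lemma indep_sets_coordinate_events: "prob_space.indep_sets cantor_measure coordinate_events UNIV"
proof -
  interpret prob_space cantor_measure by (rule prob_space_cantor_measure)
  define B where "B = measure_pmf (bernoulli_pmf (1/2))"
  have C: "cantor_measure = PiM UNIV (\<lambda>_. B)" by (simp add: cantor_measure_def B_def)
  have coordinate: "(\<lambda>t. t i) \<in> cantor_measure \<rightarrow>\<^sub>M B" for i
    unfolding C by (rule measurable_component_singleton) simp
  have "indep_vars (\<lambda>_. B) (\<lambda>i t. t i) UNIV"
  proof (subst indep_vars_iff_distr_eq_PiM)
    have "distr cantor_measure B (\<lambda>t. t i) = B" for i
      unfolding C B_def by (rule distr_PiM_component) (auto intro: prob_space_measure_pmf)
    moreover have "(\<lambda>t::nat \<Rightarrow> bool. \<lambda>i\<in>UNIV. t i) = (\<lambda>t. t)" by (simp add: fun_eq_iff)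
    ultimately show "distr cantor_measure (Pi\<^sub>M UNIV (\<lambda>_. B)) (\<lambda>t. \<lambda>i\<in>UNIV. t i)
        = Pi\<^sub>M UNIV (\<lambda>i. distr cantor_measure B (\<lambda>t. t i))"
      by (simp add: C[symmetric])
  qed (use coordinate in auto)
  then show ?thesis unfolding indep_vars_def coordinate_events_def B_def by simp
qed

lemma measurable_clear_prefix:
  "(\<lambda>t i. if i < n then False else t i) \<in> sigma UNIV (\<Union>(coordinate_events ` {n..})) \<rightarrow>\<^sub>M cantor_measure"
proof -
  let ?M = "sigma UNIV (\<Union>(coordinate_events ` {n..}))"
  have sets_M: "sets ?M = sigma_sets UNIV (\<Union>(coordinate_events ` {n..}))"
    by (rule sets_measure_of) auto
  show ?thesis unfolding cantor_measure_def
  proof (rule measurable_PiM_single)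
    fix X i assume X: "X \<in> sets (measure_pmf (bernoulli_pmf (1/2)))"
    show "{t \<in> space ?M. (if i < n then False else t i) \<in> X} \<in> sets ?M"
    proof (cases "i < n")
      case False
      have "(\<lambda>t. t i) -` X \<inter> UNIV \<in> coordinate_events i"
        unfolding coordinate_events_def by (rule sigma_sets.Basic) (use X in blast)
      then have "(\<lambda>t. t i) -` X \<inter> UNIV \<in> \<Union>(coordinate_events ` {n..})" using False by auto
      moreover have "{t \<in> space ?M. (if i < n then False else t i) \<in> X} = (\<lambda>t. t i) -` X \<inter> UNIV"
        using False by auto
      ultimately show ?thesis unfolding sets_M by (simp only:) (rule sigma_sets.Basic)
    next
      case True
      then have "{t \<in> space ?M. (if i < n then False else t i) \<in> X} = (if False \<in> X then space ?M else {})"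
        by auto
      then show ?thesis by (simp add: sigma_sets_top sigma_sets.Empty)
    qed
  qed simp
qed

text \<open>Clearing the first \<open>n\<close> coordinates is a finite flip, so an invariant set is its own preimage
  under a map that only reads the coordinates from \<open>n\<close> on.\<close>
lemma tail_event_if_flip_invariant:
  assumes B: "B \<in> sets cantor_measure" and inv: "flip_invariant B"
  shows "B \<in> prob_space.tail_events cantor_measure coordinate_events"
  unfolding prob_space.tail_events_def[OF prob_space_cantor_measure]
proof (intro InterI, clarsimp)
  fix n
  let ?M = "sigma UNIV (\<Union>(coordinate_events ` {n..}))"
  let ?h = "\<lambda>t i. if i < n then False else t i"
  have "?h t \<in> B \<longleftrightarrow> t \<in> B" for t
  proof -
    have "?h t = flip {i. i < n \<and> t i} t" by (auto simp: flip_def fun_eq_iff)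
    moreover have "flip {i. i < n \<and> t i} t \<in> B \<longleftrightarrow> t \<in> B"
      using inv unfolding flip_invariant_def by simp
    ultimately show ?thesis by (simp only:)
  qed
  moreover have "space ?M = UNIV" by (rule space_measure_of) auto
  ultimately have "?h -` B \<inter> space ?M = B" by (intro set_eqI) simp
  moreover have "?h -` B \<inter> space ?M \<in> sets ?M"
    using measurable_sets[OF measurable_clear_prefix B] .
  moreover have "sets ?M = sigma_sets UNIV (\<Union>(coordinate_events ` {n..}))"
    by (rule sets_measure_of) (auto simp: coordinate_events_def)
  ultimately show "B \<in> sigma_sets UNIV (\<Union>(coordinate_events ` {n..}))" by simp
qed

lemma flip_invariant_zero_one:
  assumes "B \<in> sets cantor_measure" and "flip_invariant B"
  shows "measure cantor_measure B = 0 \<or> measure cantor_measure B = 1"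
proof (rule prob_space.kolmogorov_0_1_law[OF prob_space_cantor_measure _
      indep_sets_coordinate_events tail_event_if_flip_invariant[OF assms]])
  show "sigma_algebra (space cantor_measure) (coordinate_events i)" for i
    by (simp add: coordinate_events_def sigma_algebra_sigma_sets)
qed

definition flip_kernel :: "(nat \<Rightarrow> bool) set \<Rightarrow> (nat \<Rightarrow> bool) set" where
  "flip_kernel S = (\<Inter>G\<in>{G. finite G}. flip G -` S)"

lemma flip_kernel_subset: "flip_kernel S \<subseteq> S"
  unfolding flip_kernel_def by force

lemma flip_kernel_flip:
  assumes "finite H" and "t \<in> flip_kernel S"
  shows "flip H t \<in> flip_kernel S"
proof -
  have "flip G (flip H t) \<in> S" if "finite G" for G
  proof -
    have "finite ((G - H) \<union> (H - G))" using that assms(1) by blast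
    then show ?thesis using assms(2) unfolding flip_kernel_def flip_flip by blast
  qed
  then show ?thesis unfolding flip_kernel_def by blast
qed

lemma flip_invariant_flip_kernel: "flip_invariant (flip_kernel S)"
  unfolding flip_invariant_def using flip_kernel_flip flip_flip_same by metis

lemma sets_flip_kernel: "S \<in> sets cantor_measure \<Longrightarrow> flip_kernel S \<in> sets cantor_measure"
  unfolding flip_kernel_def
  by (intro sets.countable_INT'' countable_Collect_finite) (simp_all add: sets_vimage_flip)

text \<open>A flip-invariant set in the completion differs from the kernel of its measurable part by a
  null set: a point that some finite flip moves out of the measurable part lands in the null part.\<close>
lemma measure_completion_flip_invariant:
  assumes A: "A \<in> sets (completion cantor_measure)" and inv: "flip_invariant A"
  obtains B where "B \<in> sets cantor_measure" "flip_invariant B"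
    "measure (completion cantor_measure) A = measure cantor_measure B"
proof -
  obtain S N N' where SN: "A = S \<union> N" "N \<subseteq> N'" "N' \<in> null_sets cantor_measure" "S \<in> sets cantor_measure"
    using sets_completionE[OF A] by metis
  define N'' where "N'' = (\<Union>G\<in>{G. finite G}. flip G -` N')"
  have N'': "N'' \<in> null_sets cantor_measure"
    unfolding N''_def using SN(3) by (intro null_sets_UN' countable_Collect_finite null_sets_vimage_flip)
  have "A - flip_kernel S \<subseteq> N''"
  proof
    fix t assume t: "t \<in> A - flip_kernel S"
    then obtain G where G: "finite G" "flip G t \<notin> S" unfolding flip_kernel_def by blast
    have "flip G t \<in> A" using inv G(1) t unfolding flip_invariant_def by blast
    then have "flip G t \<in> N'" using G(2) SN(1,2) by blast
    then show "t \<in> N''" using G(1) unfolding N''_def by blast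
  qed
  then have "measure (completion cantor_measure) (flip_kernel S \<union> (A - flip_kernel S))
      = measure cantor_measure (flip_kernel S)"
    using N'' sets_flip_kernel[OF SN(4)] by (rule measure_completion_Un_null)
  moreover have "flip_kernel S \<union> (A - flip_kernel S) = A"
    using flip_kernel_subset[of S] SN(1) by blast
  ultimately have "measure (completion cantor_measure) A = measure cantor_measure (flip_kernel S)"
    by simp
  then show ?thesis using that sets_flip_kernel[OF SN(4)] flip_invariant_flip_kernel by blast
qed

lemma flip_invariant_completion_zero_one:
  assumes "A \<in> sets (completion cantor_measure)" and "flip_invariant A"
  shows "measure (completion cantor_measure) A = 0 \<or> measure (completion cantor_measure) A = 1"
proof -
  obtain B where "B \<in> sets cantor_measure" "flip_invariant B"
    "measure (completion cantor_measure) A = measure cantor_measure B"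
    using measure_completion_flip_invariant[OF assms] .
  then show ?thesis using flip_invariant_zero_one by simp
qed

lemma selected_sum_cong: "(\<forall>k\<le>n. t k = t' k) \<Longrightarrow> selected_sum x t n = selected_sum x t' n"
  unfolding selected_sum_def by (intro sum.cong) auto

lemma sets_cantor_measure_selected_sum_far:
  "{t. (inverse (real (Suc m)) < norm (selected_sum x t n - selected_sum x t N)) = b} \<in> sets cantor_measure"
proof (rule sets_cantor_measure_finitely_determined)
  fix t t' :: "nat \<Rightarrow> bool" assume "\<forall>k<Suc (max n N). t k = t' k"
  then have "selected_sum x t n = selected_sum x t' n" "selected_sum x t N = selected_sum x t' N"
    by (auto intro!: selected_sum_cong)
  then show "((inverse (real (Suc m)) < norm (selected_sum x t n - selected_sum x t N)) = b)
      = ((inverse (real (Suc m)) < norm (selected_sum x t' n - selected_sum x t' N)) = b)"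
    by simp
qed

lemma A_set_in_completion:
  fixes x :: "nat \<Rightarrow> 'a::banach"
  assumes I: "ideal_on I"
    and analytic: "analytic_cantor (ideal_as_cantor I) \<or> coanalytic_cantor (ideal_as_cantor I)"
  shows "A_set I x \<in> sets (completion cantor_measure)"
proof -
  define far where "far m N t =
      (\<lambda>n. inverse (real (Suc m)) < norm (selected_sum x t n - selected_sum x t N))" for m N t
  have "A_set I x = (\<Inter>m. \<Union>N. {t. far m N t \<in> ideal_as_cantor I})"
    by (auto simp: mem_A_set_iff I_convergent_iff_I_Cauchy[OF I] I_Cauchy_iff_inverse_Suc[OF I]
        far_def ideal_as_cantor_def)
  also have "\<dots> \<in> sets (completion cantor_measure)"
  proof -
    have "{t. far m N t \<in> ideal_as_cantor I} \<in> sets (completion cantor_measure)" for m N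
      by (rule analytic_or_coanalytic_preimage_in_completion[OF analytic])
        (unfold far_def, rule sets_cantor_measure_selected_sum_far)
    then show ?thesis by (intro sets.countable_INT sets.countable_UN) auto
  qed
  finally show ?thesis .
qed

lemma flip_UNIV_in_full_measure_set:
  assumes A: "A \<in> sets (completion cantor_measure)"
    and full: "measure (completion cantor_measure) A = 1"
  obtains t where "t \<in> A" "flip UNIV t \<in> A"
proof -
  interpret C: prob_space "completion cantor_measure"
    by (rule prob_space.prob_space_completion[OF prob_space_cantor_measure])
  have "AE t in completion cantor_measure. t \<in> A"
    using full by (rule C.AE_prob_1)
  moreover have "AE t in completion cantor_measure. t \<in> flip UNIV -` A"
    using measure_completion_vimage_flip[OF A, of UNIV] full by (intro C.AE_prob_1) simp
  ultimately have both: "AE t in completion cantor_measure. t \<in> A \<and> flip UNIV t \<in> A"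
    by eventually_elim simp
  have "AE t in completion cantor_measure. False" if "\<not> (\<exists>t. t \<in> A \<and> flip UNIV t \<in> A)"
    using both by (rule eventually_mono) (use that in blast)
  then show ?thesis using that C.AE_False by blast
qed

theorem theorem4p1:
  fixes \<I> :: "nat set set" and x :: "nat \<Rightarrow> 'a::banach"
  assumes "ideal_on \<I>"
    and "analytic_cantor (ideal_as_cantor \<I>) \<or> coanalytic_cantor (ideal_as_cantor \<I>)"
  shows "A_set \<I> x \<in> sets (completion cantor_measure)
    \<and> (measure (completion cantor_measure) (A_set \<I> x) = 0
       \<or> measure (completion cantor_measure) (A_set \<I> x) = 1)
    \<and> (\<not> I_convergent_series \<I> x \<longrightarrow> measure (completion cantor_measure) (A_set \<I> x) = 0)"
proof -
  let ?\<mu> = "completion cantor_measure"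
  have meas: "A_set \<I> x \<in> sets ?\<mu>" by (rule A_set_in_completion[OF assms])
  have zero_one: "measure ?\<mu> (A_set \<I> x) = 0 \<or> measure ?\<mu> (A_set \<I> x) = 1"
    by (rule flip_invariant_completion_zero_one[OF meas flip_invariant_A_set[OF assms(1)]])
  have "measure ?\<mu> (A_set \<I> x) = 0" if divergent: "\<not> I_convergent_series \<I> x"
  proof (rule ccontr)
    assume "measure ?\<mu> (A_set \<I> x) \<noteq> 0"
    then have "measure ?\<mu> (A_set \<I> x) = 1" using zero_one by simp
    then obtain t where "t \<in> A_set \<I> x" "flip UNIV t \<in> A_set \<I> x"
      using flip_UNIV_in_full_measure_set[OF meas] by blast
    then show False using I_convergent_series_if_flip_UNIV[OF assms(1)] divergent by blast
  qed
  with meas zero_one show ?thesis by blast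
qed

end
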